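(* Let $\epsilon>0$, $n\ge1$, $s=\sqrt{e^\epsilon}$, and let $\mathbf{w}\in\mathbb{R}^d$ be non-increasing. For parameters $\mathbf{m}$ (with $m_j\ge0$, $\sum_jm_j=1$) and $c\in\mathbb{R}$, let $\mathrm{err}_{\mathrm{MSE}}(\mathbf{m},c)=\mathbb{E}[|\tilde\theta-\theta|_2^2]$, where $n$ voters with scored votes $v^{(1)},\dots,v^{(n)}$ independently apply the weighted sampling mechanism with parameters $(\epsilon,\mathbf{w},\mathbf{m},c)$ to get $\tilde v^{(i)}$, $\theta=\frac1n\sum_iv^{(i)}$, $\tilde\theta=\frac1n\sum_i\tilde v^{(i)}$. Then $$\min_{\mathbf{m},c}\mathrm{err}_{\mathrm{MSE}}(\mathbf{m},c)\le\frac1n\Big(1+\frac{ds}{(s-1)^2}\Big)\Big(\sum_{j=1}^d|w_j-w_{\lceil d/2\rceil}|\Big)^2.$$ Moreover, if $\mathbf{w}$ is not constant, this upper bound holds for the choice $c^*=w_{\lceil d/2\rceil}$ and $m^*_j=\frac{|w_j-c^*|}{\sum_{i=1}^d|w_i-c^*|}$.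
   Context: Candidates are $A_1,\dots,A_d$; a vote $\pi$ is a linear ordering, $\pi_j$ the index of the candidate at rank $j$; the scored vote is $v$ with $v_{\pi_j}=w_j$. The weighted sampling mechanism with parameters $(\epsilon,\mathbf{w},\mathbf{m},c)$, on input $\pi$: (1) samples a rank $j^*$ with $\Pr[j^*=j]=m_j$, independently of $\pi$; (2) sets $B\in\{0,1\}^d$ with $B_{\pi_{j^*}}=1$, other entries $0$; (3) independently for each $k$, sets $\tilde B_k=1-B_k$ with probability $\frac1{s+1}$, else $\tilde B_k=B_k$; (4) outputs $\tilde v_k=\frac{(s+1)\tilde B_k-1}{s-1}\cdot\frac{w_{j^*}-c}{m_{j^*}}+c$. *)

theory Defs
  imports "HOL-Probability.Probability" "HOL-Combinatorics.Permutations"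
begin

text \<open>Candidates and ranks are indexed by 1..d.  A vote pi is a permutation of {1..d}
  with pi j = index of the candidate at rank j.  Weights w and sampling
  probabilities m are functions nat => real, only their values on 1..d matter.\<close>

definition scored_vote :: "(nat \<Rightarrow> real) \<Rightarrow> (nat \<Rightarrow> nat) \<Rightarrow> nat \<Rightarrow> real" where
  "scored_vote w \<pi> k = w (inv \<pi> k)"

definition prob_vec :: "nat \<Rightarrow> (nat \<Rightarrow> real) \<Rightarrow> bool" where
  "prob_vec d m \<longleftrightarrow> (\<forall>j\<in>{1..d}. 0 \<le> m j) \<and> (\<Sum>j=1..d. m j) = 1"

text \<open>Distribution of the sampled rank: Pr[j* = j] = m j (meaningful when prob_vec d m).\<close>
definition rank_pmf :: "nat \<Rightarrow> (nat \<Rightarrow> real) \<Rightarrow> nat pmf" where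
  "rank_pmf d m = embed_pmf (\<lambda>j. if j \<in> {1..d} then m j else 0)"

definition wsm_s :: "real \<Rightarrow> real" where
  "wsm_s \<epsilon> = sqrt (exp \<epsilon>)"

definition wsm :: "real \<Rightarrow> (nat \<Rightarrow> real) \<Rightarrow> (nat \<Rightarrow> real) \<Rightarrow> real \<Rightarrow> nat \<Rightarrow> (nat \<Rightarrow> nat)
                     \<Rightarrow> (nat \<Rightarrow> real) pmf" where
  "wsm \<epsilon> w m c d \<pi> =
     do { j \<leftarrow> rank_pmf d m;
          F \<leftarrow> Pi_pmf {1..d} False (\<lambda>_. bernoulli_pmf (1 / (wsm_s \<epsilon> + 1)));
          return_pmf (\<lambda>k. if k \<in> {1..d} then
             (let B = (k = \<pi> j); Bt = (B \<noteq> F k) in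
               ((wsm_s \<epsilon> + 1) * of_bool Bt - 1) / (wsm_s \<epsilon> - 1) * ((w j - c) / m j) + c)
             else 0) }"

definition err_MSE :: "real \<Rightarrow> (nat \<Rightarrow> real) \<Rightarrow> nat \<Rightarrow> nat \<Rightarrow> (nat \<Rightarrow> nat \<Rightarrow> nat)
                         \<Rightarrow> (nat \<Rightarrow> real) \<Rightarrow> real \<Rightarrow> real" where
  "err_MSE \<epsilon> w d n P m c =
     measure_pmf.expectation (Pi_pmf {1..n} (\<lambda>_. 0) (\<lambda>i. wsm \<epsilon> w m c d (P i)))
       (\<lambda>V. \<Sum>k=1..d. ((1 / real n) * (\<Sum>i=1..n. V i k)
                        - (1 / real n) * (\<Sum>i=1..n. scored_vote w (P i) k))\<^sup>2)"

end

(*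
  Each voter's output is an unbiased estimate of its scored vote: given the sampled rank j,
  coordinate k is c plus (w j - c) / m j times a debiased randomized-response bit whose mean
  is [k = pi j].  Hence a voter's squared error is at most its second moment about c, which
  equals (1 + d s / (s - 1)^2) * sum_j (w j - c)^2 / m j: rank j contributes the factor
  s^2 - s + 1 on its own coordinate and s on each of the other d - 1.  The voters are
  independent, so averaging n of them divides the error by n.  Finally the weights
  m j proportional to |w j - c| turn sum_j (w j - c)^2 / m j into (sum_j |w j - c|)^2;
  for constant w both sides vanish.
*)

theory Submission
  imports Defs
begin

lemma finite_set_Pi_pmf:
  assumes "finite I" and "\<And>i. i \<in> I \<Longrightarrow> finite (set_pmf (p i))"
  shows "finite (set_pmf (Pi_pmf I dflt p))"
  using assms by (subst set_Pi_pmf) auto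

lemma map_pmf_Pi_pmf_pair:
  assumes "finite I" and "i \<in> I" and "j \<in> I" and "i \<noteq> j"
  shows "map_pmf (\<lambda>V. (V i, V j)) (Pi_pmf I dflt p) = pair_pmf (p i) (p j)"
proof -
  have I: "I = insert i (I - {i})" using assms by auto
  have "map_pmf (\<lambda>V. (V i, V j)) (Pi_pmf I dflt p)
      = map_pmf (\<lambda>V. (V i, V j)) (map_pmf (\<lambda>(y, f). f(i := y)) (pair_pmf (p i) (Pi_pmf (I - {i}) dflt p)))"
    using assms by (subst I, subst Pi_pmf_insert) auto
  also have "\<dots> = map_pmf (\<lambda>(a, b). (id a, (\<lambda>f. f j) b)) (pair_pmf (p i) (Pi_pmf (I - {i}) dflt p))"
    using assms by (simp add: pmf.map_comp o_def case_prod_unfold)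
  also have "\<dots> = pair_pmf (p i) (p j)"
    using assms by (subst map_pair) (simp add: Pi_pmf_component)
  finally show ?thesis .
qed

lemma expectation_pair_pmf_mult:
  fixes f g :: "'a \<Rightarrow> real"
  assumes A: "finite (set_pmf A)" and B: "finite (set_pmf B)"
  shows "measure_pmf.expectation (pair_pmf A B) (\<lambda>z. f (fst z) * g (snd z))
       = measure_pmf.expectation A f * measure_pmf.expectation B g"
proof -
  have "measure_pmf.expectation (pair_pmf A B) (\<lambda>z. f (fst z) * g (snd z))
      = (\<Sum>z\<in>set_pmf A \<times> set_pmf B. f (fst z) * g (snd z) * pmf (pair_pmf A B) z)"
    by (rule integral_measure_pmf_real) (use A B in auto)
  also have "\<dots> = (\<Sum>a\<in>set_pmf A. f a * pmf A a) * (\<Sum>b\<in>set_pmf B. g b * pmf B b)"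
    by (auto simp: sum_product sum.cartesian_product pmf_pair mult_ac intro!: sum.cong)
  also have "\<dots> = measure_pmf.expectation A f * measure_pmf.expectation B g"
    using A B by (simp add: integral_measure_pmf_real)
  finally show ?thesis .
qed

lemma expectation_Pi_pmf_mult_components:
  fixes f g :: "'a \<Rightarrow> real"
  assumes "finite I" and "i \<in> I" and "j \<in> I" and "i \<noteq> j"
    and "finite (set_pmf (p i))" and "finite (set_pmf (p j))"
  shows "measure_pmf.expectation (Pi_pmf I dflt p) (\<lambda>V. f (V i) * g (V j))
       = measure_pmf.expectation (p i) f * measure_pmf.expectation (p j) g"
proof -
  have "measure_pmf.expectation (Pi_pmf I dflt p) (\<lambda>V. f (V i) * g (V j))
      = measure_pmf.expectation (map_pmf (\<lambda>V. (V i, V j)) (Pi_pmf I dflt p)) (\<lambda>z. f (fst z) * g (snd z))"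
    by simp
  then show ?thesis
    using assms by (simp add: map_pmf_Pi_pmf_pair expectation_pair_pmf_mult)
qed

lemma expectation_square_sum_Pi_pmf:
  fixes f :: "'i \<Rightarrow> 'a \<Rightarrow> real"
  assumes I: "finite I" and fin: "\<And>i. i \<in> I \<Longrightarrow> finite (set_pmf (p i))"
    and centered: "\<And>i. i \<in> I \<Longrightarrow> measure_pmf.expectation (p i) (f i) = 0"
  shows "measure_pmf.expectation (Pi_pmf I dflt p) (\<lambda>V. (\<Sum>i\<in>I. f i (V i))\<^sup>2)
       = (\<Sum>i\<in>I. measure_pmf.expectation (p i) (\<lambda>x. (f i x)\<^sup>2))"
proof -
  let ?Q = "Pi_pmf I dflt p"
  have "finite (set_pmf ?Q)" using I fin by (rule finite_set_Pi_pmf)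
  then have integrable: "integrable (measure_pmf ?Q) g" for g :: "('i \<Rightarrow> 'a) \<Rightarrow> real"
    by (rule integrable_measure_pmf_finite)
  have cross: "measure_pmf.expectation ?Q (\<lambda>V. f i (V i) * f j (V j))
      = (if i = j then measure_pmf.expectation (p i) (\<lambda>x. (f i x)\<^sup>2) else 0)"
    if "i \<in> I" "j \<in> I" for i j
  proof (cases "i = j")
    case True
    have "measure_pmf.expectation ?Q (\<lambda>V. f i (V i) * f i (V i))
        = measure_pmf.expectation (map_pmf (\<lambda>V. V i) ?Q) (\<lambda>x. (f i x)\<^sup>2)"
      by (simp add: power2_eq_square)
    with True that I show ?thesis by (simp add: Pi_pmf_component)
  next
    case False
    with that I fin centered show ?thesis by (simp add: expectation_Pi_pmf_mult_components)
  qed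
  have "measure_pmf.expectation ?Q (\<lambda>V. (\<Sum>i\<in>I. f i (V i))\<^sup>2)
      = (\<Sum>i\<in>I. \<Sum>j\<in>I. measure_pmf.expectation ?Q (\<lambda>V. f i (V i) * f j (V j)))"
    by (simp add: power2_eq_square sum_product integrable)
  also have "\<dots> = (\<Sum>i\<in>I. measure_pmf.expectation (p i) (\<lambda>x. (f i x)\<^sup>2))"
    using I by (simp add: cross)
  finally show ?thesis .
qed

lemma expectation_sq_dev_mean_le:
  fixes f :: "'a \<Rightarrow> real"
  assumes "finite (set_pmf M)"
  shows "measure_pmf.expectation M (\<lambda>x. (f x - measure_pmf.expectation M f)\<^sup>2)
       \<le> measure_pmf.expectation M (\<lambda>x. (f x - c)\<^sup>2)"
proof -
  let ?E = "measure_pmf.expectation M"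
  let ?\<mu> = "?E f"
  have integrable: "integrable (measure_pmf M) g" for g :: "'a \<Rightarrow> real"
    using assms by (rule integrable_measure_pmf_finite)
  have "(\<lambda>x. (f x - c)\<^sup>2) = (\<lambda>x. (f x - ?\<mu>)\<^sup>2 + 2 * (?\<mu> - c) * (f x - ?\<mu>) + (?\<mu> - c)\<^sup>2)"
    by (simp add: power2_eq_square algebra_simps)
  then have "?E (\<lambda>x. (f x - c)\<^sup>2) = ?E (\<lambda>x. (f x - ?\<mu>)\<^sup>2) + (?\<mu> - c)\<^sup>2"
    by (simp add: integrable)
  then show ?thesis by simp
qed

lemma pmf_rank_pmf:
  assumes "prob_vec d m"
  shows "pmf (rank_pmf d m) j = (if j \<in> {1..d} then m j else 0)"
proof -
  have nonneg: "0 \<le> (if j \<in> {1..d} then m j else 0)" for j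
    using assms by (auto simp: prob_vec_def)
  have "(\<integral>\<^sup>+j. ennreal (if j \<in> {1..d} then m j else 0) \<partial>count_space UNIV)
      = (\<Sum>j\<in>{1..d}. ennreal (m j))"
    by (subst nn_integral_count_space'[where A = "{1..d}"]) auto
  also have "\<dots> = ennreal (\<Sum>j\<in>{1..d}. m j)"
    using assms by (intro sum_ennreal) (auto simp: prob_vec_def)
  also have "\<dots> = 1"
    using assms by (simp add: prob_vec_def)
  finally show ?thesis
    unfolding rank_pmf_def using nonneg by (subst pmf_embed_pmf) auto
qed

lemma set_pmf_rank_pmf: "prob_vec d m \<Longrightarrow> set_pmf (rank_pmf d m) \<subseteq> {1..d}"
  by (auto simp: set_pmf_eq pmf_rank_pmf)

lemma finite_set_pmf_wsm:
  assumes "prob_vec d m"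
  shows "finite (set_pmf (wsm \<epsilon> w m c d \<pi>))"
proof -
  have "finite (set_pmf (rank_pmf d m))"
    using set_pmf_rank_pmf[OF assms] finite_subset by blast
  moreover have "finite (set_pmf (Pi_pmf {1..d} False (\<lambda>_. bernoulli_pmf (1 / (wsm_s \<epsilon> + 1)))))"
    by (rule finite_set_Pi_pmf) auto
  ultimately show ?thesis
    unfolding wsm_def by (auto simp: set_bind_pmf)
qed

lemma wsm_s_gt_1: "\<epsilon> > 0 \<Longrightarrow> wsm_s \<epsilon> > 1"
  unfolding wsm_s_def by (simp add: real_less_rsqrt)

text \<open>The factor \<open>((s + 1) B' - 1) / (s - 1)\<close> of step (4) of the mechanism, where \<open>B' = (B \<noteq> b)\<close>
  is the bit \<open>B\<close> flipped by a coin \<open>b\<close> showing \<open>True\<close> with probability \<open>1 / (s + 1)\<close>.\<close>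
definition debiased_flip :: "real \<Rightarrow> bool \<Rightarrow> bool \<Rightarrow> real" where
  "debiased_flip s B b = ((s + 1) * of_bool (B \<noteq> b) - 1) / (s - 1)"

lemma expectation_bernoulli_inverse_succ:
  fixes f :: "bool \<Rightarrow> real"
  assumes "s > 1"
  shows "measure_pmf.expectation (bernoulli_pmf (1 / (s + 1))) f = (f True + s * f False) / (s + 1)"
proof -
  have "0 \<le> 1 / (s + 1)" "1 / (s + 1) \<le> 1" "s + 1 \<noteq> 0" using assms by auto
  then show ?thesis by (simp add: divide_simps)
qed

lemma debiased_flip_eq: "debiased_flip s B b = (if B = b then - 1 / (s - 1) else s / (s - 1))"
  by (simp add: debiased_flip_def)

lemma expectation_debiased_flip:
  assumes "s > 1"
  shows "measure_pmf.expectation (bernoulli_pmf (1 / (s + 1))) (debiased_flip s B) = of_bool B"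
proof -
  have "s - 1 \<noteq> 0" "s + 1 \<noteq> 0" using assms by auto
  moreover have "s * s - 1 = (s - 1) * (s + 1)" by algebra
  ultimately show ?thesis
    unfolding expectation_bernoulli_inverse_succ[OF assms]
    by (cases B) (auto simp: debiased_flip_eq divide_simps)
qed

lemma expectation_debiased_flip_sq:
  assumes "s > 1"
  shows "measure_pmf.expectation (bernoulli_pmf (1 / (s + 1))) (\<lambda>b. (debiased_flip s B b)\<^sup>2)
       = (if B then s\<^sup>2 - s + 1 else s) / (s - 1)\<^sup>2"
proof -
  have "s - 1 \<noteq> 0" "s + 1 \<noteq> 0" using assms by auto
  moreover have "s ^ 3 + 1 = (s\<^sup>2 - s + 1) * (s + 1)" "s\<^sup>2 + s = s * (s + 1)" by algebra+
  ultimately show ?thesis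
    unfolding expectation_bernoulli_inverse_succ[OF assms]
    by (cases B) (auto simp: debiased_flip_eq divide_simps power2_eq_square power3_eq_cube)
qed

lemma map_pmf_wsm_coordinate:
  assumes "k \<in> {1..d}"
  shows "map_pmf (\<lambda>V. V k) (wsm \<epsilon> w m c d \<pi>)
       = rank_pmf d m \<bind> (\<lambda>j. map_pmf (\<lambda>b. debiased_flip (wsm_s \<epsilon>) (k = \<pi> j) b * ((w j - c) / m j) + c)
                                    (bernoulli_pmf (1 / (wsm_s \<epsilon> + 1))))"
proof -
  let ?coins = "Pi_pmf {1..d} False (\<lambda>_. bernoulli_pmf (1 / (wsm_s \<epsilon> + 1)))"
  have "map_pmf (\<lambda>V. V k) (wsm \<epsilon> w m c d \<pi>)
      = rank_pmf d m \<bind> (\<lambda>j. map_pmf (\<lambda>b. debiased_flip (wsm_s \<epsilon>) (k = \<pi> j) b * ((w j - c) / m j) + c)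
                                    (map_pmf (\<lambda>F. F k) ?coins))"
    using assms by (simp add: wsm_def map_bind_pmf map_pmf_def[symmetric] pmf.map_comp o_def
        debiased_flip_def Let_def)
  then show ?thesis
    using assms by (simp add: Pi_pmf_component)
qed

lemma expectation_wsm_coordinate:
  fixes h :: "real \<Rightarrow> real"
  assumes "prob_vec d m" and "k \<in> {1..d}"
  shows "measure_pmf.expectation (wsm \<epsilon> w m c d \<pi>) (\<lambda>V. h (V k))
       = (\<Sum>j=1..d. m j * measure_pmf.expectation (bernoulli_pmf (1 / (wsm_s \<epsilon> + 1)))
            (\<lambda>b. h (debiased_flip (wsm_s \<epsilon>) (k = \<pi> j) b * ((w j - c) / m j) + c)))"
    (is "_ = ?rhs")
proof -
  have "measure_pmf.expectation (wsm \<epsilon> w m c d \<pi>) (\<lambda>V. h (V k))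
      = measure_pmf.expectation (map_pmf (\<lambda>V. V k) (wsm \<epsilon> w m c d \<pi>)) h"
    by simp
  also have "\<dots> = (\<Sum>j=1..d. pmf (rank_pmf d m) j *\<^sub>R measure_pmf.expectation
      (map_pmf (\<lambda>b. debiased_flip (wsm_s \<epsilon>) (k = \<pi> j) b * ((w j - c) / m j) + c)
        (bernoulli_pmf (1 / (wsm_s \<epsilon> + 1)))) h)"
    unfolding map_pmf_wsm_coordinate[OF assms(2)]
    by (rule pmf_expectation_bind) (use set_pmf_rank_pmf[OF assms(1)] in auto)
  also have "\<dots> = ?rhs"
    using assms(1) by (simp add: pmf_rank_pmf)
  finally show ?thesis .
qed

text \<open>A rank with \<open>m j = 0\<close> is never sampled, and its term \<open>(w j - c) / m j\<close> is \<open>0\<close> anyway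
  (\<open>x / 0 = 0\<close>); unbiasedness therefore needs \<open>w j = c\<close> for such ranks.\<close>
lemma wsm_coordinate_unbiased:
  assumes "\<epsilon> > 0" and "prob_vec d m" and "\<forall>j\<in>{1..d}. 0 < m j \<or> w j = c"
    and "\<pi> permutes {1..d}" and "k \<in> {1..d}"
  shows "measure_pmf.expectation (wsm \<epsilon> w m c d \<pi>) (\<lambda>V. V k) = scored_vote w \<pi> k"
proof -
  let ?s = "wsm_s \<epsilon>"
  define j0 where "j0 = inv \<pi> k"
  have j0: "j0 \<in> {1..d}"
    unfolding j0_def using assms(4,5) by (meson permutes_in_image permutes_inv)
  have rank_j0: "(k = \<pi> j) = (j = j0)" for j
    unfolding j0_def using assms(4) by (metis permutes_inv_eq)
  have mean: "measure_pmf.expectation (bernoulli_pmf (1 / (?s + 1))) (\<lambda>b. debiased_flip ?s B b * a + c)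
      = of_bool B * a + c" for B a
    using expectation_debiased_flip[OF wsm_s_gt_1[OF assms(1)]]
    by (simp add: integrable_measure_pmf_finite)
  have "measure_pmf.expectation (wsm \<epsilon> w m c d \<pi>) (\<lambda>V. V k)
      = (\<Sum>j=1..d. m j * measure_pmf.expectation (bernoulli_pmf (1 / (?s + 1)))
          (\<lambda>b. debiased_flip ?s (k = \<pi> j) b * ((w j - c) / m j) + c))"
    by (rule expectation_wsm_coordinate[OF assms(2,5), where h = "\<lambda>x. x"])
  also have "\<dots> = (\<Sum>j=1..d. m j * (of_bool (j = j0) * ((w j - c) / m j) + c))"
    by (simp only: mean rank_j0)
  also have "\<dots> = m j0 * ((w j0 - c) / m j0) + c * (\<Sum>j=1..d. m j)"
  proof -
    have "m j * (of_bool (j = j0) * ((w j - c) / m j) + c)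
        = (if j = j0 then m j * ((w j - c) / m j) else 0) + c * m j" for j
      by (simp add: algebra_simps)
    then show ?thesis
      using j0 by (simp add: sum.distrib sum_distrib_left)
  qed
  also have "\<dots> = w j0"
    using assms(2) assms(3)[rule_format, OF j0] by (auto simp: prob_vec_def)
  finally show ?thesis
    by (simp add: scored_vote_def j0_def)
qed

lemma wsm_coordinate_second_moment:
  assumes "\<epsilon> > 0" and "prob_vec d m" and "k \<in> {1..d}"
  shows "measure_pmf.expectation (wsm \<epsilon> w m c d \<pi>) (\<lambda>V. (V k - c)\<^sup>2)
       = (\<Sum>j=1..d. (w j - c)\<^sup>2 / m j
            * ((if k = \<pi> j then (wsm_s \<epsilon>)\<^sup>2 - wsm_s \<epsilon> + 1 else wsm_s \<epsilon>) / (wsm_s \<epsilon> - 1)\<^sup>2))"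
proof -
  let ?s = "wsm_s \<epsilon>"
  have second_moment: "measure_pmf.expectation (bernoulli_pmf (1 / (?s + 1)))
        (\<lambda>b. (debiased_flip ?s B b * a + c - c)\<^sup>2)
      = a\<^sup>2 * ((if B then ?s\<^sup>2 - ?s + 1 else ?s) / (?s - 1)\<^sup>2)" for B a
    using expectation_debiased_flip_sq[OF wsm_s_gt_1[OF assms(1)], of B]
    by (simp add: power_mult_distrib mult.commute[of _ "a\<^sup>2"])
  have "measure_pmf.expectation (wsm \<epsilon> w m c d \<pi>) (\<lambda>V. (V k - c)\<^sup>2)
      = (\<Sum>j=1..d. m j * measure_pmf.expectation (bernoulli_pmf (1 / (?s + 1)))
          (\<lambda>b. (debiased_flip ?s (k = \<pi> j) b * ((w j - c) / m j) + c - c)\<^sup>2))"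
    by (rule expectation_wsm_coordinate[OF assms(2,3)])
  also have "\<dots> = (\<Sum>j=1..d. m j * (((w j - c) / m j)\<^sup>2
      * ((if k = \<pi> j then ?s\<^sup>2 - ?s + 1 else ?s) / (?s - 1)\<^sup>2)))"
    by (simp only: second_moment)
  also have "\<dots> = (\<Sum>j=1..d. (w j - c)\<^sup>2 / m j
      * ((if k = \<pi> j then ?s\<^sup>2 - ?s + 1 else ?s) / (?s - 1)\<^sup>2))"
    by (intro sum.cong refl, cases "m j = 0") (simp_all add: power_divide power2_eq_square)
  finally show ?thesis .
qed

lemma sum_if_eq_const:
  fixes a b :: "'b :: comm_ring_1"
  assumes "finite A" and "x \<in> A"
  shows "(\<Sum>k\<in>A. if k = x then a else b) = a - b + of_nat (card A) * b"
proof -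
  have "card A = Suc (card (A - {x}))"
    using assms by (rule card_Suc_Diff1[symmetric])
  then show ?thesis
    using assms by (simp add: sum.delta_remove algebra_simps)
qed

lemma wsm_sq_error_le:
  assumes "\<epsilon> > 0" and "prob_vec d m" and "\<forall>j\<in>{1..d}. 0 < m j \<or> w j = c"
    and "\<pi> permutes {1..d}"
  shows "measure_pmf.expectation (wsm \<epsilon> w m c d \<pi>) (\<lambda>V. \<Sum>k=1..d. (V k - scored_vote w \<pi> k)\<^sup>2)
       \<le> (1 + real d * wsm_s \<epsilon> / (wsm_s \<epsilon> - 1)\<^sup>2) * (\<Sum>j=1..d. (w j - c)\<^sup>2 / m j)"
proof -
  let ?s = "wsm_s \<epsilon>"
  let ?X = "wsm \<epsilon> w m c d \<pi>"
  have s: "?s > 1" using assms(1) by (rule wsm_s_gt_1)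
  have fin: "finite (set_pmf ?X)" using assms(2) by (rule finite_set_pmf_wsm)
  have "measure_pmf.expectation ?X (\<lambda>V. \<Sum>k=1..d. (V k - scored_vote w \<pi> k)\<^sup>2)
      = (\<Sum>k=1..d. measure_pmf.expectation ?X (\<lambda>V. (V k - scored_vote w \<pi> k)\<^sup>2))"
    using fin by (simp add: integrable_measure_pmf_finite)
  also have "\<dots> \<le> (\<Sum>k=1..d. measure_pmf.expectation ?X (\<lambda>V. (V k - c)\<^sup>2))"
  proof (rule sum_mono)
    fix k assume "k \<in> {1..d}"
    with assms have "measure_pmf.expectation ?X (\<lambda>V. V k) = scored_vote w \<pi> k"
      by (intro wsm_coordinate_unbiased)
    then show "measure_pmf.expectation ?X (\<lambda>V. (V k - scored_vote w \<pi> k)\<^sup>2)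
        \<le> measure_pmf.expectation ?X (\<lambda>V. (V k - c)\<^sup>2)"
      using expectation_sq_dev_mean_le[OF fin, of "\<lambda>V. V k" c] by simp
  qed
  also have "\<dots> = (\<Sum>k=1..d. \<Sum>j=1..d. (w j - c)\<^sup>2 / m j
      * ((if k = \<pi> j then ?s\<^sup>2 - ?s + 1 else ?s) / (?s - 1)\<^sup>2))"
    by (rule sum.cong[OF refl]) (rule wsm_coordinate_second_moment[OF assms(1,2)])
  also have "\<dots> = (\<Sum>j=1..d. (w j - c)\<^sup>2 / m j / (?s - 1)\<^sup>2
      * (\<Sum>k=1..d. if k = \<pi> j then ?s\<^sup>2 - ?s + 1 else ?s))"
    by (subst sum.swap) (simp add: sum_distrib_left)
  also have "\<dots> = (\<Sum>j=1..d. (w j - c)\<^sup>2 / m j / (?s - 1)\<^sup>2 * ((?s - 1)\<^sup>2 + real d * ?s))"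
  proof (rule sum.cong[OF refl])
    fix j assume "j \<in> {1..d}"
    then have "\<pi> j \<in> {1..d}" using assms(4) by (meson permutes_in_image)
    then show "(w j - c)\<^sup>2 / m j / (?s - 1)\<^sup>2 * (\<Sum>k=1..d. if k = \<pi> j then ?s\<^sup>2 - ?s + 1 else ?s)
        = (w j - c)\<^sup>2 / m j / (?s - 1)\<^sup>2 * ((?s - 1)\<^sup>2 + real d * ?s)"
      by (simp add: sum_if_eq_const power2_eq_square algebra_simps)
  qed
  also have "\<dots> = (1 + real d * ?s / (?s - 1)\<^sup>2) * (\<Sum>j=1..d. (w j - c)\<^sup>2 / m j)"
  proof -
    have "x / (?s - 1)\<^sup>2 * ((?s - 1)\<^sup>2 + real d * ?s) = (1 + real d * ?s / (?s - 1)\<^sup>2) * x" for x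
      using s by (simp add: field_simps)
    then show ?thesis by (simp only: sum_distrib_left)
  qed
  finally show ?thesis .
qed

lemma err_MSE_le:
  assumes "\<epsilon> > 0" and "n \<ge> 1" and "prob_vec d m" and "\<forall>j\<in>{1..d}. 0 < m j \<or> w j = c"
    and "\<And>i. i \<in> {1..n} \<Longrightarrow> P i permutes {1..d}"
  shows "err_MSE \<epsilon> w d n P m c
       \<le> (1 / real n) * (1 + real d * wsm_s \<epsilon> / (wsm_s \<epsilon> - 1)\<^sup>2) * (\<Sum>j=1..d. (w j - c)\<^sup>2 / m j)"
proof -
  let ?C = "(1 + real d * wsm_s \<epsilon> / (wsm_s \<epsilon> - 1)\<^sup>2) * (\<Sum>j=1..d. (w j - c)\<^sup>2 / m j)"
  let ?X = "\<lambda>i. wsm \<epsilon> w m c d (P i)"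
  let ?v = "\<lambda>i. scored_vote w (P i)"
  let ?Q = "Pi_pmf {1..n} (\<lambda>_. 0) ?X"
  have fin: "finite (set_pmf (?X i))" for i
    using assms(3) by (rule finite_set_pmf_wsm)
  have "finite (set_pmf ?Q)"
    using fin by (intro finite_set_Pi_pmf) auto
  then have integrable_Q: "integrable (measure_pmf ?Q) g" for g :: "(nat \<Rightarrow> nat \<Rightarrow> real) \<Rightarrow> real"
    by (rule integrable_measure_pmf_finite)
  have centered: "measure_pmf.expectation (?X i) (\<lambda>U. U k - ?v i k) = 0"
    if "i \<in> {1..n}" "k \<in> {1..d}" for i k
    using wsm_coordinate_unbiased[OF assms(1,3,4) assms(5)[OF that(1)] that(2)] fin
    by (simp add: integrable_measure_pmf_finite)
  have "err_MSE \<epsilon> w d n P m c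
      = measure_pmf.expectation ?Q (\<lambda>V. \<Sum>k=1..d. (1 / real n)\<^sup>2 * (\<Sum>i\<in>{1..n}. V i k - ?v i k)\<^sup>2)"
    unfolding err_MSE_def
    by (simp only: right_diff_distrib[symmetric] sum_subtractf power_mult_distrib)
  also have "\<dots> = (1 / real n)\<^sup>2
      * (\<Sum>k=1..d. measure_pmf.expectation ?Q (\<lambda>V. (\<Sum>i\<in>{1..n}. V i k - ?v i k)\<^sup>2))"
    by (subst Bochner_Integration.integral_sum[OF integrable_Q]) (simp add: sum_distrib_left)
  also have "\<dots> = (1 / real n)\<^sup>2
      * (\<Sum>k=1..d. \<Sum>i\<in>{1..n}. measure_pmf.expectation (?X i) (\<lambda>U. (U k - ?v i k)\<^sup>2))"
  proof -
    have "measure_pmf.expectation ?Q (\<lambda>V. (\<Sum>i\<in>{1..n}. V i k - ?v i k)\<^sup>2)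
        = (\<Sum>i\<in>{1..n}. measure_pmf.expectation (?X i) (\<lambda>U. (U k - ?v i k)\<^sup>2))"
      if "k \<in> {1..d}" for k
      by (rule expectation_square_sum_Pi_pmf[where f = "\<lambda>i U. U k - ?v i k"])
        (use fin centered that in auto)
    then show ?thesis by simp
  qed
  also have "\<dots> = (1 / real n)\<^sup>2
      * (\<Sum>i\<in>{1..n}. measure_pmf.expectation (?X i) (\<lambda>U. \<Sum>k=1..d. (U k - ?v i k)\<^sup>2))"
    using fin by (subst sum.swap) (simp add: integrable_measure_pmf_finite)
  also have "\<dots> \<le> (1 / real n)\<^sup>2 * (\<Sum>i\<in>{1..n}. ?C)"
    using assms by (intro mult_left_mono sum_mono wsm_sq_error_le) auto
  also have "\<dots> = (1 / real n) * ?C"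
    using assms(2) by (simp add: power2_eq_square)
  finally show ?thesis
    by (simp only: mult.assoc)
qed

lemma prob_vec_uniform: "d \<ge> 1 \<Longrightarrow> prob_vec d (\<lambda>_. 1 / real d)"
  by (simp add: prob_vec_def)

lemma prob_vec_abs_proportional:
  assumes "(\<Sum>i=1..d. \<bar>a i\<bar>) \<noteq> 0"
  shows "prob_vec d (\<lambda>j. \<bar>a j\<bar> / (\<Sum>i=1..d. \<bar>a i\<bar>))"
  using assms by (simp add: prob_vec_def sum_divide_distrib[symmetric] sum_nonneg)

text \<open>Equality case of Cauchy--Schwarz: \<open>m j \<propto> \<bar>a j\<bar>\<close> minimizes \<open>\<Sum>j. (a j)\<^sup>2 / m j\<close>
  over probability vectors \<open>m\<close>.\<close>
lemma sum_sq_div_abs_proportional: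
  fixes a :: "'a \<Rightarrow> real"
  assumes "(\<Sum>i\<in>A. \<bar>a i\<bar>) \<noteq> 0"
  shows "(\<Sum>j\<in>A. (a j)\<^sup>2 / (\<bar>a j\<bar> / (\<Sum>i\<in>A. \<bar>a i\<bar>))) = (\<Sum>j\<in>A. \<bar>a j\<bar>)\<^sup>2"
proof -
  have "(a j)\<^sup>2 / (\<bar>a j\<bar> / (\<Sum>i\<in>A. \<bar>a i\<bar>)) = \<bar>a j\<bar> * (\<Sum>i\<in>A. \<bar>a i\<bar>)" for j
    using assms by (cases "a j = 0") (simp_all add: field_simps power2_eq_square)
  then show ?thesis
    by (simp add: sum_distrib_right[symmetric] power2_eq_square)
qed

lemma err_MSE_abs_proportional_le:
  assumes "\<epsilon> > 0" and "n \<ge> 1" and "\<And>i. i \<in> {1..n} \<Longrightarrow> P i permutes {1..d}"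
    and nonconst: "(\<Sum>j=1..d. \<bar>w j - c\<bar>) \<noteq> 0"
  shows "err_MSE \<epsilon> w d n P (\<lambda>j. \<bar>w j - c\<bar> / (\<Sum>i=1..d. \<bar>w i - c\<bar>)) c
       \<le> (1 / real n) * (1 + real d * wsm_s \<epsilon> / (wsm_s \<epsilon> - 1)\<^sup>2) * (\<Sum>j=1..d. \<bar>w j - c\<bar>)\<^sup>2"
proof -
  let ?S = "\<Sum>j=1..d. \<bar>w j - c\<bar>"
  have "?S > 0"
    using nonconst by (simp add: order_le_neq_trans sum_nonneg)
  then have "\<forall>j\<in>{1..d}. 0 < \<bar>w j - c\<bar> / ?S \<or> w j = c"
    by auto
  from err_MSE_le[OF assms(1,2) prob_vec_abs_proportional[OF nonconst] this assms(3)] show ?thesis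
    using sum_sq_div_abs_proportional[of "\<lambda>j. w j - c", OF nonconst] by simp
qed

lemma err_MSE_const_scores_nonpos:
  assumes "\<epsilon> > 0" and "n \<ge> 1" and "d \<ge> 1" and "\<And>i. i \<in> {1..n} \<Longrightarrow> P i permutes {1..d}"
    and "\<forall>j\<in>{1..d}. w j = c"
  shows "err_MSE \<epsilon> w d n P (\<lambda>_. 1 / real d) c \<le> 0"
proof -
  have "\<forall>j\<in>{1..d}. 0 < 1 / real d \<or> w j = c"
    using assms(5) by simp
  from err_MSE_le[OF assms(1,2) prob_vec_uniform[OF assms(3)] this assms(4)] show ?thesis
    using assms(5) by simp
qed

theorem theorem5p4:
  fixes \<epsilon> :: real and n d :: nat and w :: "nat \<Rightarrow> real" and P :: "nat \<Rightarrow> nat \<Rightarrow> nat"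
  assumes "\<epsilon> > 0" and "n \<ge> 1" and "d \<ge> 1"
    and "\<And>i j. 1 \<le> i \<Longrightarrow> i \<le> j \<Longrightarrow> j \<le> d \<Longrightarrow> w j \<le> w i"
    and "\<And>i. i \<in> {1..n} \<Longrightarrow> P i permutes {1..d}"
  defines "s \<equiv> sqrt (exp \<epsilon>)"
  defines "cs \<equiv> w (nat \<lceil>real d / 2\<rceil>)"
  defines "bound \<equiv> (1 / real n) * (1 + real d * s / (s - 1)\<^sup>2) * (\<Sum>j=1..d. \<bar>w j - cs\<bar>)\<^sup>2"
  shows "(\<exists>m c. prob_vec d m \<and> err_MSE \<epsilon> w d n P m c \<le> bound)
       \<and> ((\<exists>i\<in>{1..d}. \<exists>j\<in>{1..d}. w i \<noteq> w j) \<longrightarrow>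
            err_MSE \<epsilon> w d n P (\<lambda>j. \<bar>w j - cs\<bar> / (\<Sum>i=1..d. \<bar>w i - cs\<bar>)) cs \<le> bound)"
proof -
  have s: "wsm_s \<epsilon> = s"
    unfolding s_def wsm_s_def ..
  show ?thesis
  proof (cases "(\<Sum>j=1..d. \<bar>w j - cs\<bar>) = 0")
    case True
    then have "\<forall>j\<in>{1..d}. w j = cs"
      by (simp add: sum_nonneg_eq_0_iff)
    then have "err_MSE \<epsilon> w d n P (\<lambda>_. 1 / real d) cs \<le> bound"
      using err_MSE_const_scores_nonpos[where P = P, OF assms(1-3,5)] unfolding bound_def True by simp
    moreover have "\<not> (\<exists>i\<in>{1..d}. \<exists>j\<in>{1..d}. w i \<noteq> w j)"
      using \<open>\<forall>j\<in>{1..d}. w j = cs\<close> by simp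
    ultimately show ?thesis
      using prob_vec_uniform[OF assms(3)] by blast
  next
    case False
    then show ?thesis
      using err_MSE_abs_proportional_le[where P = P, OF assms(1,2,5) False] prob_vec_abs_proportional[OF False]
      unfolding bound_def s by blast
  qed
qed

end
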